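(* There exist a topologically regular compact set $K\subseteq\mathbb{R}^2$ and a function $F\in C^1_{\mathrm{int}}(K)$ such that $F\notin C^1(K)$. More precisely, there is a rectifiable path $\gamma:[0,1]\to K$ with $\int_\gamma dF=0$ while $F(\gamma(1))-F(\gamma(0))=1$, where $dF$ denotes the continuous extension to $K$ of the derivative of $F$ on the interior of $K$.
   Context: A compact set $K$ is topologically regular if it is the closure of its interior $\mathring K$. $C^1_{\mathrm{int}}(K)$ is the set of functions $f\in C^1(\mathring K)$ (classical continuously differentiable functions on the open set $\mathring K$) such that $f$ and its derivative $df$ extend continuously to $K$. $C^1(K)$ is the set of $f:K\to\mathbb{R}$ admitting a continuous $df:K\to\mathbb{R}^2$ with $\lim_{y\to x,\,y\in K\setminus\{x\}}\frac{f(y)-f(x)-\langle df(x),y-x\rangle}{|y-x|}=0$ for all $x\in K$. Rectifiable paths (continuous maps of finite length) and path integrals $\int_\gamma F$ (limits of Riemann–Stieltjes sums $\sum_j\langle F(\gamma(\tau_j)),\gamma(t_j)-\gamma(t_{j-1})\rangle$) are as usual. *)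

theory Defs
  imports "HOL-Analysis.Analysis"
begin

definition top_regular :: "(real^2) set \<Rightarrow> bool" where
  "top_regular K \<longleftrightarrow> closure (interior K) = K"

text \<open>C^1_int(K): F is differentiable on the interior of K with derivative
  given by the gradient field dF there, and F and dF are continuous on K
  (so they are the continuous extensions to K).\<close>
definition C1_int :: "(real^2) set \<Rightarrow> (real^2 \<Rightarrow> real) \<Rightarrow> (real^2 \<Rightarrow> real^2) \<Rightarrow> bool" where
  "C1_int K F dF \<longleftrightarrow>
     (\<forall>x\<in>interior K. (F has_derivative (\<lambda>h. dF x \<bullet> h)) (at x)) \<and>
     continuous_on K F \<and> continuous_on K dF"

definition C1_on :: "(real^2) set \<Rightarrow> (real^2 \<Rightarrow> real) \<Rightarrow> bool" where
  "C1_on K F \<longleftrightarrow> (\<exists>dF :: real^2 \<Rightarrow> real^2. continuous_on K dF \<and>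
     (\<forall>x\<in>K. ((\<lambda>y. (F y - F x - dF x \<bullet> (y - x)) / norm (y - x)) \<longlongrightarrow> 0) (at x within K)))"

definition partition01 :: "nat \<Rightarrow> (nat \<Rightarrow> real) \<Rightarrow> bool" where
  "partition01 n t \<longleftrightarrow> n \<ge> 1 \<and> t 0 = 0 \<and> t n = 1 \<and> (\<forall>j<n. t j < t (Suc j))"

definition tags_ok :: "nat \<Rightarrow> (nat \<Rightarrow> real) \<Rightarrow> (nat \<Rightarrow> real) \<Rightarrow> bool" where
  "tags_ok n t tau \<longleftrightarrow> (\<forall>j\<in>{1..n}. t (j - 1) \<le> tau j \<and> tau j \<le> t j)"

definition mesh :: "nat \<Rightarrow> (nat \<Rightarrow> real) \<Rightarrow> real" where
  "mesh n t = Max ((\<lambda>j. t j - t (j - 1)) ` {1..n})"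

definition rectifiable_path :: "(real \<Rightarrow> real^2) \<Rightarrow> bool" where
  "rectifiable_path g \<longleftrightarrow> continuous_on {0..1} g \<and>
     bdd_above {(\<Sum>j=1..n. norm (g (t j) - g (t (j - 1)))) | n t. partition01 n t}"

definition has_path_integral :: "(real^2 \<Rightarrow> real^2) \<Rightarrow> (real \<Rightarrow> real^2) \<Rightarrow> real \<Rightarrow> bool" where
  "has_path_integral G g I \<longleftrightarrow>
     (\<forall>e>0. \<exists>d>0. \<forall>n t tau. partition01 n t \<and> tags_ok n t tau \<and> mesh n t < d \<longrightarrow>
        \<bar>(\<Sum>j=1..n. G (g (tau j)) \<bullet> (g (t j) - g (t (j - 1)))) - I\<bar> < e)"

end

theory Submission
  imports Defs
begin

text \<open>
  A fat Cantor set \<open>C \<subseteq> [0,1]\<close> (compact, nowhere dense, of positive measure) has a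
  distribution function \<open>M x = |C \<inter> (-\<infinity>, x]|\<close> that is continuous, rises from \<open>0\<close> to
  \<open>|C|\<close> on \<open>[0,1]\<close> and is locally constant off \<open>C\<close>. Let \<open>K\<close> be the closure of the region
  between \<open>[0,1] \<times> {0}\<close> and the graph of \<open>dist(\<cdot>, C)\<close>. Its interior lies over the complement
  of \<open>C\<close>, so \<open>F(x,y) = M x / |C|\<close> has zero gradient there and \<open>dF = 0\<close> is the continuous
  extension; thus \<open>dF\<close> integrates to \<open>0\<close> along the base segment while \<open>F\<close> increases by \<open>1\<close>.
  If \<open>F\<close> were Whitney \<open>C\<^sup>1\<close> on \<open>K\<close>, its derivative would vanish on the interior, hence on
  \<open>K = closure (interior K)\<close>, and \<open>F\<close> would be constant along the base segment, which lies in
  \<open>K\<close> because the complement of \<open>C\<close> is dense.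
\<close>

lemma fat_cantor_set_exists:
  assumes "e > 0"
  obtains C :: "real set"
  where "compact C" "C \<subseteq> {0..1}" "interior C = {}" "measure lebesgue C \<ge> 1 - e"
proof -
  have Rats_null: "\<rat> \<in> null_sets lebesgue"
    using countable_imp_null_set_lborel[OF countable_rat] by (rule null_sets_completionI)
  then obtain U :: "real set" where U: "open U" "\<rat> \<subseteq> U" "U - \<rat> \<in> lmeasurable"
    and small: "emeasure lebesgue (U - \<rat>) < ennreal e"
    using sets_lebesgue_outer_open assms by (metis null_setsD2)
  have U_eq: "U = (U - \<rat>) \<union> \<rat>" using U by blast
  have Rats_m: "\<rat> \<in> lmeasurable"
    using Rats_null by (rule fmeasurableI_null_sets)
  have Um: "U \<in> lmeasurable"
    using fmeasurable.Un[OF U(3) Rats_m] U_eq by metis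
  have "measure lebesgue U = measure lebesgue (U - \<rat>)"
    by (rule measure_Diff_null_set[OF fmeasurableD[OF Um] Rats_null, symmetric])
  also have "\<dots> < e"
    using small emeasure_eq_measure2[OF U(3)] by (metis ennreal_less_iff measure_nonneg)
  finally have measure_U: "measure lebesgue U < e" .
  define C where "C = {0..1} - U"
  show thesis
  proof
    show "compact C" "C \<subseteq> {0..1}" unfolding C_def using U by (auto intro: compact_diff)
    show "interior C = {}"
    proof (rule ccontr)
      assume "interior C \<noteq> {}"
      then obtain x r where "r > 0" "ball x r \<subseteq> C"
        by (metis all_not_in_conv open_contains_ball open_interior interior_subset subset_trans)
      moreover obtain q where "q \<in> \<rat>" "x < q" "q < x + r"
        using Rats_dense_in_real[of x "x + r"] \<open>r > 0\<close> by auto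
      ultimately have "q \<in> C" by (auto simp: dist_real_def)
      then show False using \<open>q \<in> \<rat>\<close> U unfolding C_def by blast
    qed
    have Cm: "C \<in> lmeasurable" unfolding C_def using Um by (intro fmeasurable_Diff) auto
    have "1 = measure lebesgue {0..1::real}" by simp
    also have "\<dots> \<le> measure lebesgue (C \<union> U)"
      using Cm Um by (intro measure_mono_fmeasurable) (auto simp: C_def)
    also have "\<dots> \<le> measure lebesgue C + measure lebesgue U"
      using Cm Um by (intro measure_Un_le) auto
    finally show "measure lebesgue C \<ge> 1 - e" using measure_U by linarith
  qed
qed

definition mass_below :: "real set \<Rightarrow> real \<Rightarrow> real" where
  "mass_below C x = measure lebesgue (C \<inter> {..x})"

lemma lipschitz_mass_below:
  assumes "C \<in> lmeasurable"
  shows "lipschitz_on 1 UNIV (mass_below C)"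
proof (rule lipschitz_onI)
  have meas: "C \<inter> {..x} \<in> lmeasurable" for x
    using assms by (intro fmeasurable_Int_fmeasurable) auto
  have mono_bounded: "0 \<le> mass_below C b - mass_below C a \<and> mass_below C b - mass_below C a \<le> b - a"
    if "a \<le> b" for a b
  proof -
    have "mass_below C a \<le> mass_below C b"
      unfolding mass_below_def using meas that by (intro measure_mono_fmeasurable) auto
    moreover have "mass_below C b \<le> measure lebesgue ((C \<inter> {..a}) \<union> {a..b})"
      unfolding mass_below_def using meas by (intro measure_mono_fmeasurable) auto
    moreover have "\<dots> \<le> mass_below C a + measure lebesgue {a..b}"
      unfolding mass_below_def using meas by (intro measure_Un_le) auto
    ultimately show ?thesis using that by simp
  qed
  show "dist (mass_below C x) (mass_below C y) \<le> 1 * dist x y" for x y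
    using mono_bounded[of x y] mono_bounded[of y x] by (cases "x \<le> y") (auto simp: dist_real_def)
qed simp

lemma mass_below_has_real_derivative_0:
  assumes "closed C" "x \<notin> C"
  shows "(mass_below C has_real_derivative 0) (at x)"
proof -
  obtain r where "r > 0" "ball x r \<inter> C = {}"
    using assms by (metis open_Compl open_contains_ball ComplI disjoint_eq_subset_Compl)
  then have same_mass: "mass_below C y = mass_below C x" if "y \<in> ball x r" for y
  proof -
    have "z \<le> y \<longleftrightarrow> z \<le> x" if "z \<in> C" for z
    proof (rule ccontr)
      assume "(z \<le> y) \<noteq> (z \<le> x)"
      then have "z \<in> ball x r" using \<open>y \<in> ball x r\<close> by (auto simp: dist_real_def)
      then show False using that \<open>ball x r \<inter> C = {}\<close> by blast
    qed
    then have "C \<inter> {..y} = C \<inter> {..x}" by auto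
    then show ?thesis unfolding mass_below_def by simp
  qed
  have "\<forall>\<^sub>F y in nhds x. y \<in> ball x r"
    using \<open>r > 0\<close> by (intro eventually_nhds_in_open) auto
  then have "\<forall>\<^sub>F y in nhds x. mass_below C y = mass_below C x"
    by (rule eventually_mono) (rule same_mass)
  then show ?thesis by (subst DERIV_cong_ev[OF refl _ refl]) auto
qed

lemma mass_below_eq_0:
  assumes "C \<subseteq> {a..}"
  shows "mass_below C a = 0"
proof -
  have "negligible (C \<inter> {..a})"
    using assms by (intro negligible_subset[OF negligible_sing[of a]]) auto
  then show ?thesis unfolding mass_below_def by (rule negligible_imp_measure0)
qed

lemma mass_below_eq_measure:
  assumes "C \<subseteq> {..b}"
  shows "mass_below C b = measure lebesgue C"
  using assms unfolding mass_below_def by (simp add: Int_absorb2)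

definition region_under :: "(real \<Rightarrow> real) \<Rightarrow> (real^2) set" where
  "region_under h = {p. p$1 \<in> {0<..<1} \<and> 0 < p$2 \<and> p$2 < h (p$1)}"

lemma open_region_under:
  assumes "continuous_on UNIV h"
  shows "open (region_under h)"
proof -
  have "continuous_on UNIV (\<lambda>p::real^2. h (p$1))"
    by (rule continuous_on_compose2[OF assms]) (auto intro: continuous_intros)
  then have "open {p::real^2. p$2 < h (p$1)}"
    by (intro open_Collect_less continuous_intros)
  moreover have "open {p::real^2. 0 < p$1 \<and> p$1 < 1 \<and> 0 < p$2}"
    by (intro open_Collect_conj open_Collect_less continuous_intros)
  moreover have "region_under h = {p. p$2 < h (p$1)} \<inter> {p. 0 < p$1 \<and> p$1 < 1 \<and> 0 < p$2}"
    by (auto simp: region_under_def)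
  ultimately show ?thesis by (simp only: open_Int)
qed

lemma closure_region_under_subset:
  assumes "continuous_on UNIV h"
  shows "closure (region_under h) \<subseteq> {p. 0 \<le> p$2 \<and> p$2 \<le> h (p$1)}"
proof (rule closure_minimal)
  have "continuous_on UNIV (\<lambda>p::real^2. h (p$1))"
    by (rule continuous_on_compose2[OF assms]) (auto intro: continuous_intros)
  then show "closed {p::real^2. 0 \<le> p$2 \<and> p$2 \<le> h (p$1)}"
    by (intro closed_Collect_conj closed_Collect_le continuous_intros)
qed (auto simp: region_under_def)

lemma interior_closure_region_under:
  assumes "continuous_on UNIV h" "p \<in> interior (closure (region_under h))"
  shows "0 < h (p$1)"
proof -
  obtain e where "e > 0" "ball p e \<subseteq> interior (closure (region_under h))"
    using assms(2) open_contains_ball open_interior by metis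
  then have e: "e > 0" "ball p e \<subseteq> closure (region_under h)"
    using interior_subset by blast+
  note below_graph = subsetD[OF closure_region_under_subset[OF assms(1)]]
  define q where "q = p - (e/2) *\<^sub>R axis 2 1"
  have "q \<in> ball p e" using e by (simp add: q_def dist_norm norm_axis_1)
  then have "0 \<le> q$2" using e below_graph by blast
  moreover have "p \<in> ball p e" using e by simp
  then have "p$2 \<le> h (p$1)" using e below_graph by blast
  moreover have "q$2 = p$2 - e/2" by (simp add: q_def axis_def)
  ultimately show ?thesis using e by linarith
qed

lemma bounded_region_under:
  assumes "\<And>s. s \<in> {0<..<1} \<Longrightarrow> h s \<le> B"
  shows "bounded (region_under h)"
proof -
  have "region_under h \<subseteq> cbox 0 (\<chi> i. max 1 B)"
  proof
    fix p assume "p \<in> region_under h"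
    then have "0 < p$1" "p$1 < 1" "0 < p$2" "p$2 \<le> B"
      using assms[of "p$1"] by (auto simp: region_under_def)
    then show "p \<in> cbox 0 (\<chi> i. max 1 B)" by (auto simp: mem_box_cart forall_2 le_max_iff_disj)
  qed
  then show ?thesis using bounded_cbox bounded_subset by blast
qed

lemma base_in_closure_region_under:
  assumes "s \<in> closure {q \<in> {0<..<1}. 0 < h q}"
  shows "s *\<^sub>R axis 1 1 \<in> closure (region_under h)"
proof (unfold closure_approachable, intro allI impI)
  fix e :: real assume "e > 0"
  then obtain q where q: "q \<in> {0<..<1}" "0 < h q" "dist q s < e/2"
    using assms unfolding closure_approachable by (metis half_gt_zero mem_Collect_eq)
  define t where "t = min (h q / 2) (e / 4)"
  have t: "0 < t" "t < h q" "t < e/2" using q \<open>e > 0\<close> by (auto simp: t_def)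
  define y :: "real^2" where "y = q *\<^sub>R axis 1 1 + t *\<^sub>R axis 2 1"
  have "y \<in> region_under h" using q t by (simp add: region_under_def y_def axis_def)
  moreover have "dist y (s *\<^sub>R axis 1 1) < e"
  proof -
    have "y - s *\<^sub>R axis 1 1 = (q - s) *\<^sub>R axis 1 1 + t *\<^sub>R axis 2 1"
      by (simp add: y_def algebra_simps)
    then have "dist y (s *\<^sub>R axis 1 1) \<le> \<bar>q - s\<bar> + \<bar>t\<bar>"
      by (metis dist_norm norm_triangle_ineq norm_scaleR norm_axis_1 mult.right_neutral)
    then show ?thesis using q t by (simp add: dist_real_def)
  qed
  ultimately show "\<exists>y\<in>region_under h. dist y (s *\<^sub>R axis 1 1) < e" by blast
qed

lemma closure_Diff_nowhere_dense:
  assumes "open S" "interior C = {}"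
  shows "closure (S - C) = closure S"
  using closure_openin_Int_closure[of UNIV S "- C"] assms
  by (simp add: closure_complement Diff_eq)

lemma top_regular_closure_open:
  assumes "open T"
  shows "top_regular (closure T)"
  unfolding top_regular_def
proof
  show "closure (interior (closure T)) \<subseteq> closure T"
    by (metis closure_closure closure_mono interior_subset)
  show "closure T \<subseteq> closure (interior (closure T))"
    using assms by (intro closure_mono interior_maximal closure_subset)
qed

lemma partition01_step:
  assumes "partition01 n t" "j \<in> {1..n}"
  shows "t (j - 1) < t j"
proof -
  have "j - 1 < n" "Suc (j - 1) = j" using assms(2) by auto
  then show ?thesis using assms(1) unfolding partition01_def by metis
qed

lemma partition01_in_01:
  assumes "partition01 n t" "j \<le> n"
  shows "t j \<in> {0..1}"
proof -
  have mono: "t i \<le> t (Suc i)" if "i \<in> {..<n}" for i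
    using partition01_step[OF assms(1), of "Suc i"] that by simp
  have "t 0 \<le> t j" "t j \<le> t n"
    using assms(2) by (auto intro: lift_Suc_mono_le_ivl[where N = "{..<n}" and f = t, OF mono])
  then show ?thesis using assms(1) by (simp add: partition01_def)
qed

lemma rectifiable_path_lipschitz:
  assumes "lipschitz_on L {0..1} g"
  shows "rectifiable_path g"
  unfolding rectifiable_path_def
proof
  show "continuous_on {0..1} g" using assms by (rule lipschitz_on_continuous_on)
  show "bdd_above {(\<Sum>j=1..n. norm (g (t j) - g (t (j - 1)))) | n t. partition01 n t}"
  proof (rule bdd_aboveI[where M = L], safe)
    fix n t assume t: "partition01 n t"
    have "(\<Sum>j=1..n. norm (g (t j) - g (t (j - 1)))) \<le> (\<Sum>j=1..n. L * (t j - t (j - 1)))"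
    proof (rule sum_mono)
      fix j assume j: "j \<in> {1..n}"
      then have "t j \<in> {0..1}" "t (j - 1) \<in> {0..1}" using partition01_in_01[OF t] by auto
      then show "norm (g (t j) - g (t (j - 1))) \<le> L * (t j - t (j - 1))"
        using lipschitz_onD[OF assms, of "t j" "t (j - 1)"] partition01_step[OF t j]
        by (simp add: dist_norm dist_real_def)
    qed
    also have "\<dots> = L * (t n - t 0)"
    proof -
      have "(\<Sum>j=1..m. t j - t (j - 1)) = t m - t 0" for m
        by (induction m) (auto simp: sum.cl_ivl_Suc)
      then show ?thesis by (simp add: sum_distrib_left[symmetric])
    qed
    also have "\<dots> = L" using t by (simp add: partition01_def)
    finally show "(\<Sum>j=1..n. norm (g (t j) - g (t (j - 1)))) \<le> L" .
  qed
qed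

lemma has_path_integral_0: "has_path_integral (\<lambda>_. 0) g 0"
  unfolding has_path_integral_def by (intro allI impI exI[of _ 1]) simp

definition flat_on :: "'a::real_normed_vector set \<Rightarrow> ('a \<Rightarrow> real) \<Rightarrow> bool" where
  "flat_on K F \<longleftrightarrow> (\<forall>x\<in>K. ((\<lambda>y. (F y - F x) / norm (y - x)) \<longlongrightarrow> 0) (at x within K))"

lemma C1_on_imp_flat_on:
  assumes "top_regular K" "C1_on K F"
    and deriv_0: "\<And>x. x \<in> interior K \<Longrightarrow> (F has_derivative (\<lambda>h. 0)) (at x)"
  shows "flat_on K F"
proof -
  obtain D where D: "continuous_on K D" and
    W: "\<And>x. x \<in> K \<Longrightarrow> ((\<lambda>y. (F y - F x - D x \<bullet> (y - x)) / norm (y - x)) \<longlongrightarrow> 0) (at x within K)"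
    using assms(2) unfolding C1_on_def by blast
  have D_interior: "D x = 0" if x: "x \<in> interior K" for x
  proof -
    have "((\<lambda>y. (F y - F x - D x \<bullet> (y - x)) / norm (y - x)) \<longlongrightarrow> 0) (at x)"
      using W[OF interior_subset[THEN subsetD, OF x]] by (simp add: at_within_interior[OF x])
    then have "(F has_derivative (\<lambda>h. D x \<bullet> h)) (at x)"
      by (simp add: has_derivative_at_within bounded_linear_inner_right divide_inverse_commute)
    then have "(\<lambda>h. D x \<bullet> h) = (\<lambda>h. 0)"
      using deriv_0[OF x] by (rule has_derivative_unique)
    then show ?thesis by (metis inner_eq_zero_iff)
  qed
  have "D x = 0" if "x \<in> K" for x
    using continuous_constant_on_closure[of "interior K" D 0 x] D D_interior that assms(1)
    unfolding top_regular_def by simp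
  then show ?thesis using W unfolding flat_on_def by simp
qed

lemma flat_on_segment_eq:
  fixes F :: "'a::real_normed_vector \<Rightarrow> real"
  assumes "flat_on K F" "closed_segment a b \<subseteq> K"
  shows "F a = F b"
proof (cases "a = b")
  case False
  define g where "g t = a + t *\<^sub>R (b - a)" for t :: real
  have norm_g: "norm (g t - g s) = \<bar>t - s\<bar> * norm (b - a)" for s t
    by (simp add: g_def flip: scaleR_diff_left)
  have g_inj: "g t \<noteq> g s" if "t \<noteq> s" for s t
    using norm_g[of t s] that False by auto
  have g_in: "g t \<in> K" if "t \<in> {0..1}" for t
    using that assms(2) unfolding closed_segment_def g_def
    by (force simp: algebra_simps)
  have "((F \<circ> g) has_real_derivative 0) (at s within {0..1})" if s: "s \<in> {0..1}" for s
  proof -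
    have flat: "((\<lambda>y. (F y - F (g s)) / norm (y - g s)) \<longlongrightarrow> 0) (at (g s) within K)"
      using assms(1) g_in[OF s] unfolding flat_on_def by blast
    have "filterlim g (at (g s) within K) (at s within {0..1})"
      unfolding filterlim_at
    proof
      show "\<forall>\<^sub>F t in at s within {0..1}. g t \<in> K \<and> g t \<noteq> g s"
        using g_in g_inj by (auto simp: eventually_at_filter intro!: always_eventually)
      show "(g \<longlongrightarrow> g s) (at s within {0..1})" unfolding g_def by (intro tendsto_intros)
    qed
    from tendsto_mult_right_zero[OF filterlim_compose[OF flat this], of "norm (b - a)"]
    have "((\<lambda>t. (F (g t) - F (g s)) / \<bar>t - s\<bar>) \<longlongrightarrow> 0) (at s within {0..1})"
      using False by (simp add: norm_g)
    then have "((\<lambda>t. \<bar>(F (g t) - F (g s)) / \<bar>t - s\<bar>\<bar>) \<longlongrightarrow> 0) (at s within {0..1})"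
      by (rule tendsto_rabs_zero)
    then have "((\<lambda>t. \<bar>(F (g t) - F (g s)) / (t - s)\<bar>) \<longlongrightarrow> 0) (at s within {0..1})"
      by (simp add: abs_divide)
    then show ?thesis
      unfolding has_field_derivative_iff by (simp add: tendsto_rabs_zero_cancel)
  qed
  then obtain c where "\<forall>t\<in>{0..1}. (F \<circ> g) t = c"
    using has_field_derivative_zero_constant[of "{0..1}"] by (metis convex_real_interval(5))
  moreover have "F a = (F \<circ> g) 0" "F b = (F \<circ> g) 1" by (simp_all add: g_def)
  ultimately show ?thesis by simp
qed simp

locale fat_cantor =
  fixes C :: "real set"
  assumes compact: "compact C" and subset_01: "C \<subseteq> {0..1}"
    and nowhere_dense: "interior C = {}" and positive_measure: "measure lebesgue C > 0"
begin

definition height :: "real \<Rightarrow> real" where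
  "height s = infdist s C"

definition domain :: "(real^2) set" where
  "domain = closure (region_under height)"

definition staircase :: "real^2 \<Rightarrow> real" where
  "staircase p = mass_below C (p$1) / measure lebesgue C"

lemma nonempty: "C \<noteq> {}"
  using positive_measure by auto

lemma continuous_height: "continuous_on UNIV height"
  unfolding height_def by (intro continuous_intros)

lemma height_pos_iff: "0 < height s \<longleftrightarrow> s \<notin> C"
  using nonempty compact_imp_closed[OF compact] unfolding height_def
  by (metis in_closed_iff_infdist_zero infdist_pos_not_in_closed less_irrefl)

lemma compact_domain: "compact domain"
proof -
  obtain c where "c \<in> C" using nonempty by blast
  then have "height s \<le> 1" if "s \<in> {0<..<1}" for s
    using infdist_le[OF \<open>c \<in> C\<close>, of s] subset_01 that unfolding height_def dist_real_def by force
  then show ?thesis unfolding domain_def by (intro compact_closure[THEN iffD2] bounded_region_under)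
qed

lemma top_regular_domain: "top_regular domain"
  unfolding domain_def using open_region_under[OF continuous_height] by (rule top_regular_closure_open)

lemma staircase_has_derivative_0:
  assumes "p \<in> interior domain"
  shows "(staircase has_derivative (\<lambda>h. 0)) (at p)"
proof -
  have "p$1 \<notin> C"
    using interior_closure_region_under[OF continuous_height] assms height_pos_iff
    unfolding domain_def by blast
  then have "(mass_below C has_real_derivative 0) (at (p$1))"
    using compact by (intro mass_below_has_real_derivative_0 compact_imp_closed)
  then have "((\<lambda>x. mass_below C x / measure lebesgue C) has_real_derivative 0) (at (p$1))"
    using DERIV_cdivide by fastforce
  from has_derivative_compose[OF bounded_linear_imp_has_derivative[OF bounded_linear_vec_nth]
      this[THEN has_field_derivative_imp_has_derivative]]
  show ?thesis unfolding staircase_def[abs_def] by simp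
qed

lemma C1_int_staircase: "C1_int domain staircase (\<lambda>_. 0)"
proof -
  have "continuous_on UNIV (mass_below C)"
    using lipschitz_on_continuous_on[OF lipschitz_mass_below[OF lmeasurable_compact[OF compact]]] .
  then have "continuous_on UNIV (\<lambda>p::real^2. mass_below C (p$1))"
    by (rule continuous_on_compose2) (auto intro: continuous_intros)
  then have "continuous_on UNIV staircase"
    unfolding staircase_def[abs_def] using positive_measure
    by (intro continuous_on_divide continuous_on_const) auto
  then have "continuous_on domain staircase" by (rule continuous_on_subset) simp
  moreover have "(staircase has_derivative (\<lambda>h. (0::real^2) \<bullet> h)) (at p)" if "p \<in> interior domain" for p
    using staircase_has_derivative_0[OF that] by (rule has_derivative_eq_rhs) (simp add: fun_eq_iff)
  ultimately show ?thesis
    unfolding C1_int_def using continuous_on_const by blast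
qed

lemma closed_segment_subset_domain: "closed_segment 0 (axis 1 1) \<subseteq> domain"
proof -
  have "closure {q \<in> {0<..<1}. 0 < height q} = {0..1}"
    using closure_Diff_nowhere_dense[OF _ nowhere_dense, of "{0<..<1}"] height_pos_iff
    by (simp add: set_diff_eq)
  then show ?thesis
    unfolding domain_def closed_segment_image_interval
    using base_in_closure_region_under by auto
qed

lemma staircase_increment: "staircase (axis 1 1) - staircase 0 = 1"
proof -
  have "mass_below C 0 = 0" "mass_below C 1 = measure lebesgue C"
    using subset_01 by (auto intro!: mass_below_eq_0 mass_below_eq_measure)
  then show ?thesis using positive_measure by (simp add: staircase_def axis_def)
qed

lemma not_C1_on_staircase: "\<not> C1_on domain staircase"
proof
  assume "C1_on domain staircase"
  with top_regular_domain have "flat_on domain staircase"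
    using staircase_has_derivative_0 by (rule C1_on_imp_flat_on)
  then have "staircase 0 = staircase (axis 1 1)"
    using closed_segment_subset_domain by (rule flat_on_segment_eq)
  then show False using staircase_increment by simp
qed

end

theorem mainTheorem4:
  shows "\<exists>(K :: (real^2) set) (F :: real^2 \<Rightarrow> real) (dF :: real^2 \<Rightarrow> real^2).
           compact K \<and> top_regular K \<and> C1_int K F dF \<and> \<not> C1_on K F \<and>
           (\<exists>g :: real \<Rightarrow> real^2. rectifiable_path g \<and> g ` {0..1} \<subseteq> K \<and>
              has_path_integral dF g 0 \<and> F (g 1) - F (g 0) = 1)"
proof -
  obtain C :: "real set" where "compact C" "C \<subseteq> {0..1}" "interior C = {}" "measure lebesgue C \<ge> 1/2"
    using fat_cantor_set_exists[of "1/2"] by auto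
  then interpret fat_cantor C by unfold_locales auto
  define g :: "real \<Rightarrow> real^2" where "g s = s *\<^sub>R axis 1 1" for s
  have "dist (g s) (g t) = dist s t" for s t
    by (simp add: g_def dist_norm norm_axis_1 dist_real_def flip: scaleR_diff_left)
  then have "rectifiable_path g"
    by (intro rectifiable_path_lipschitz[of 1] lipschitz_onI) auto
  moreover have "g ` {0..1} \<subseteq> domain"
    using closed_segment_subset_domain by (simp add: g_def closed_segment_image_interval)
  moreover have "staircase (g 1) - staircase (g 0) = 1"
    using staircase_increment by (simp add: g_def)
  ultimately show ?thesis
    using compact_domain top_regular_domain C1_int_staircase not_C1_on_staircase has_path_integral_0
    by (intro exI[of _ domain] exI[of _ staircase] exI[of _ "\<lambda>_. 0"] exI[of _ g] conjI) auto
qed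

end
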